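(* Let $n \ge 1$ be an integer and let $R$ be a $2n$-adically closed ring. Then there are no polygons in $R$.
   Context: All rings are commutative with $1$. For $k \in \mathbb{N}=\{1,2,\dots\}$, a ring $R$ is called $k$-adically closed if every monic polynomial of degree $k$ with coefficients in $R$ has a root in $R$ (a $2$-adically closed ring is also called quadratically closed). A polygon in a ring $R$ consists of: an integer $m>2$, irreducible closed subsets $C_0,\dots,C_{m-1}$ of $\mathrm{Spec}(R)$, and irreducible closed subsets $D_0,\dots,D_{m-1}$ of $\mathrm{Spec}(R)$, such that for all $i,j\in\{0,\dots,m-1\}$ we have $D_j\subset C_i$ if and only if $i=j$ or $i\equiv j+1 \pmod m$. (Irreducible closed subsets are nonempty.) *)

theory Defs
  imports "HOL-Computational_Algebra.Polynomial"
begin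

definition prime_ideal :: "'a::comm_ring_1 set \<Rightarrow> bool" where
  "prime_ideal P \<longleftrightarrow> 0 \<in> P \<and> (\<forall>x\<in>P. \<forall>y\<in>P. x + y \<in> P) \<and> (\<forall>x\<in>P. \<forall>r. r * x \<in> P)
     \<and> 1 \<notin> P \<and> (\<forall>x y. x * y \<in> P \<longrightarrow> x \<in> P \<or> y \<in> P)"

definition Spec :: "'a::comm_ring_1 set set" where
  "Spec = {P. prime_ideal P}"

definition zariski_closed :: "'a::comm_ring_1 set set \<Rightarrow> bool" where
  "zariski_closed Z \<longleftrightarrow> (\<exists>S. Z = {P \<in> Spec. S \<subseteq> P})"

definition irreducible_closed :: "'a::comm_ring_1 set set \<Rightarrow> bool" where
  "irreducible_closed Z \<longleftrightarrow> zariski_closed Z \<and> Z \<noteq> {} \<and>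
     (\<forall>Z1 Z2. zariski_closed Z1 \<longrightarrow> zariski_closed Z2 \<longrightarrow> Z \<subseteq> Z1 \<union> Z2 \<longrightarrow> Z \<subseteq> Z1 \<or> Z \<subseteq> Z2)"

definition k_adically_closed :: "nat \<Rightarrow> 'a::comm_ring_1 itself \<Rightarrow> bool" where
  "k_adically_closed k _ \<longleftrightarrow>
     (\<forall>p :: 'a poly. degree p = k \<and> lead_coeff p = 1 \<longrightarrow> (\<exists>x. poly p x = 0))"

definition is_polygon :: "nat \<Rightarrow> (nat \<Rightarrow> 'a::comm_ring_1 set set) \<Rightarrow> (nat \<Rightarrow> 'a set set) \<Rightarrow> bool" where
  "is_polygon m C D \<longleftrightarrow> m > 2 \<and>
     (\<forall>i<m. irreducible_closed (C i)) \<and> (\<forall>j<m. irreducible_closed (D j)) \<and>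
     (\<forall>i<m. \<forall>j<m. D j \<subseteq> C i \<longleftrightarrow> (i = j \<or> i = (j + 1) mod m))"

end

theory Submission
  imports Defs
begin

(*
  An irreducible closed subset of Spec R is V(p) for its generic point p, a prime
  ideal, and inclusions of irreducible closed sets reverse inclusions of generic points.  A
  polygon therefore yields primes P_0, ..., P_{m-1} and Q_0, ..., Q_{m-1} with P_i <= Q_j
  exactly when j = i or j = i - 1 (mod m); we call such data a prime polygon.

  Prime avoidance gives b = x + y + w, with x in P_0, y in P_{m-1}, w in P_1, ..., P_{m-2},
  lying in no Q_k.  Since g^n is monic of degree 2n for g = X^2 - bX + yw, the ring contains
  some r with g(r) nilpotent, hence g(r) lies in every prime.  Modulo P_i (1 <= i <= m-1) the
  element r is one of the two "roots" r, r - b; modulo P_0 it is congruent to x + y or to w.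
  Because b avoids every Q_k, the choice of root cannot change along the path
  P_1 - Q_1 - P_2 - ... - P_{m-1}, while the edge through P_0, Q_0 and Q_{m-1} forces it to
  change: a contradiction.
*)

definition is_ideal :: "'a::comm_ring_1 set \<Rightarrow> bool" where
  "is_ideal I \<longleftrightarrow> 0 \<in> I \<and> (\<forall>x\<in>I. \<forall>y\<in>I. x + y \<in> I) \<and> (\<forall>x\<in>I. \<forall>r. r * x \<in> I)"

lemma ideal_zero: "is_ideal I \<Longrightarrow> 0 \<in> I"
  and ideal_add: "is_ideal I \<Longrightarrow> x \<in> I \<Longrightarrow> y \<in> I \<Longrightarrow> x + y \<in> I"
  and ideal_mult_left: "is_ideal I \<Longrightarrow> x \<in> I \<Longrightarrow> r * x \<in> I"
  unfolding is_ideal_def by blast+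

lemma ideal_mult_right: "is_ideal I \<Longrightarrow> x \<in> I \<Longrightarrow> x * r \<in> I"
  by (metis ideal_mult_left mult.commute)

lemma ideal_diff: "is_ideal I \<Longrightarrow> x \<in> I \<Longrightarrow> y \<in> I \<Longrightarrow> x - y \<in> I"
  using ideal_add[of I x "(-1) * y"] ideal_mult_left[of I y "-1"] by simp

lemma ideal_add_notin:
  assumes "is_ideal I" "x \<notin> I" "y \<in> I"
  shows "x + y \<notin> I" "y + x \<notin> I"
proof -
  show "x + y \<notin> I"
    using ideal_diff[OF assms(1), of "x + y" y] assms(2,3) by auto
  then show "y + x \<notin> I" by (simp add: add.commute)
qed

lemma ideal_Inter: "(\<And>i. i \<in> A \<Longrightarrow> is_ideal (I i)) \<Longrightarrow> is_ideal (\<Inter>i\<in>A. I i)"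
  unfolding is_ideal_def by (auto intro: ideal_zero ideal_add ideal_mult_left)

definition ideal_sum :: "'a::comm_ring_1 set \<Rightarrow> 'a set \<Rightarrow> 'a set" where
  "ideal_sum I J = {a + b | a b. a \<in> I \<and> b \<in> J}"

lemma ideal_sum_is_ideal:
  assumes I: "is_ideal I" and J: "is_ideal J"
  shows "is_ideal (ideal_sum I J)"
  unfolding is_ideal_def ideal_sum_def
proof (intro conjI ballI allI)
  show "0 \<in> {a + b | a b. a \<in> I \<and> b \<in> J}"
    using ideal_zero[OF I] ideal_zero[OF J] by force
next
  fix x y assume "x \<in> {a + b | a b. a \<in> I \<and> b \<in> J}" "y \<in> {a + b | a b. a \<in> I \<and> b \<in> J}"
  then obtain a b a' b' where "x = a + b" "y = a' + b'" "a \<in> I" "b \<in> J" "a' \<in> I" "b' \<in> J"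
    by blast
  moreover have "x + y = (a + a') + (b + b')" using calculation by (simp add: algebra_simps)
  ultimately show "x + y \<in> {a + b | a b. a \<in> I \<and> b \<in> J}"
    using ideal_add[OF I] ideal_add[OF J] by blast
next
  fix x r assume "x \<in> {a + b | a b. a \<in> I \<and> b \<in> J}"
  then obtain a b where "x = a + b" "a \<in> I" "b \<in> J" by blast
  moreover have "r * x = r * a + r * b" using calculation by (simp add: algebra_simps)
  ultimately show "r * x \<in> {a + b | a b. a \<in> I \<and> b \<in> J}"
    using ideal_mult_left[OF I] ideal_mult_left[OF J] by blast
qed

lemma ideal_sum_upper:
  "is_ideal J \<Longrightarrow> I \<subseteq> ideal_sum I J" "is_ideal I \<Longrightarrow> J \<subseteq> ideal_sum I J"
  unfolding ideal_sum_def
  by (fastforce intro: exI[of _ 0] dest: ideal_zero)+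

lemma prime_ideal_is_ideal: "prime_ideal P \<Longrightarrow> is_ideal P"
  and prime_ideal_one: "prime_ideal P \<Longrightarrow> 1 \<notin> P"
  and prime_ideal_mult: "prime_ideal P \<Longrightarrow> x * y \<in> P \<Longrightarrow> x \<in> P \<or> y \<in> P"
  unfolding prime_ideal_def is_ideal_def by blast+

lemma prime_ideal_power: "prime_ideal P \<Longrightarrow> x ^ n \<in> P \<Longrightarrow> x \<in> P"
proof (induction n)
  case (Suc n)
  then show ?case by (metis power_Suc prime_ideal_mult)
qed (simp add: prime_ideal_one)

lemma prime_ideal_not_both:
  assumes "prime_ideal Q" "b \<notin> Q" "r \<in> Q" "r - b \<in> Q"
  shows False
  using ideal_diff[OF prime_ideal_is_ideal[OF assms(1)] assms(3,4)] assms(2) by simp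

lemma prod_mem_ideal:
  "is_ideal I \<Longrightarrow> finite A \<Longrightarrow> i \<in> A \<Longrightarrow> f i \<in> I \<Longrightarrow> prod f A \<in> I"
  by (metis prod.remove ideal_mult_right)

lemma prod_notin_prime:
  assumes "prime_ideal P" "\<And>i. i \<in> A \<Longrightarrow> f i \<notin> P"
  shows "prod f A \<notin> P"
  using assms(2)
proof (induction A rule: infinite_finite_induct)
  case (insert a A)
  then show ?case using prime_ideal_mult[OF assms(1)] by auto
qed (simp_all add: prime_ideal_one[OF assms(1)])

lemma Inter_not_subset_prime:
  assumes "prime_ideal Q" "finite A" "\<And>i. i \<in> A \<Longrightarrow> is_ideal (I i) \<and> \<not> I i \<subseteq> Q"
  shows "\<not> (\<Inter>i\<in>A. I i) \<subseteq> Q"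
proof -
  have "\<forall>i\<in>A. \<exists>x. x \<in> I i \<and> x \<notin> Q" using assms(3) by blast
  then obtain a where a: "\<forall>i\<in>A. a i \<in> I i \<and> a i \<notin> Q"
    by (rule bchoice[THEN exE]) blast
  have "prod a A \<in> (\<Inter>i\<in>A. I i)"
  proof
    fix i assume "i \<in> A"
    then show "prod a A \<in> I i" using prod_mem_ideal[of "I i" A i a] assms(2,3) a by blast
  qed
  moreover have "prod a A \<notin> Q" by (rule prod_notin_prime[OF assms(1)]) (use a in blast)
  ultimately show ?thesis by blast
qed

lemma prime_avoidance_step:
  assumes I: "is_ideal I" and fin: "finite \<Q>" and Q0: "Q0 \<in> \<Q>" "\<Q> - {Q0} \<noteq> {}"
    and primes: "\<forall>Q\<in>\<Q>. prime_ideal Q"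
    and a_in: "\<forall>Q\<in>\<Q>. a Q \<in> I \<and> a Q \<in> Q"
    and a_avoids: "\<forall>Q\<in>\<Q>. \<forall>Q'\<in>\<Q>. Q' \<noteq> Q \<longrightarrow> a Q \<notin> Q'"
  shows "a Q0 + prod a (\<Q> - {Q0}) \<in> I \<and> (\<forall>Q\<in>\<Q>. a Q0 + prod a (\<Q> - {Q0}) \<notin> Q)"
proof (intro conjI ballI)
  let ?c = "prod a (\<Q> - {Q0})"
  obtain Q1 where Q1: "Q1 \<in> \<Q> - {Q0}" using Q0(2) by blast
  have "?c \<in> I" using prod_mem_ideal[OF I _ Q1] fin a_in Q1 by blast
  then show "a Q0 + ?c \<in> I" using ideal_add[OF I] a_in Q0(1) by blast
  fix Q assume Q: "Q \<in> \<Q>"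
  have ideal_Q: "is_ideal Q" using primes Q prime_ideal_is_ideal by blast
  show "a Q0 + ?c \<notin> Q"
  proof (cases "Q = Q0")
    case True
    have "?c \<notin> Q"
      by (rule prod_notin_prime) (use primes Q True a_avoids in auto)
    then show ?thesis using ideal_add_notin(2)[OF ideal_Q] a_in Q True by blast
  next
    case False
    have "?c \<in> Q" using prod_mem_ideal[OF ideal_Q, of "\<Q> - {Q0}" Q a] fin Q False a_in by blast
    then show ?thesis using ideal_add_notin(1)[OF ideal_Q] a_avoids Q Q0(1) False by blast
  qed
qed

lemma prime_avoidance:
  assumes I: "is_ideal I" and fin: "finite \<Q>"
    and avoid: "\<forall>Q\<in>\<Q>. prime_ideal Q \<and> \<not> I \<subseteq> Q"
  shows "\<exists>b\<in>I. \<forall>Q\<in>\<Q>. b \<notin> Q"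
  using fin avoid
proof (induction "card \<Q>" arbitrary: \<Q> rule: less_induct)
  case less
  consider "\<Q> = {}" | Q0 where "\<Q> = {Q0}" | Q0 where "Q0 \<in> \<Q>" "\<Q> - {Q0} \<noteq> {}"
    by blast
  then show ?case
  proof cases
    case 1
    then show ?thesis using ideal_zero[OF I] by blast
  next
    case 2
    then show ?thesis using less.prems(2) by blast
  next
    case 3
    have avoid_others: "\<forall>Q\<in>\<Q>. \<exists>b. b \<in> I \<and> (\<forall>Q'\<in>\<Q> - {Q}. b \<notin> Q')"
    proof
      fix Q assume "Q \<in> \<Q>"
      then have "card (\<Q> - {Q}) < card \<Q>" using less.prems(1) by (meson card_Diff1_less)
      then show "\<exists>b. b \<in> I \<and> (\<forall>Q'\<in>\<Q> - {Q}. b \<notin> Q')"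
        using less.hyps[of "\<Q> - {Q}"] less.prems by blast
    qed
    then obtain a where a: "\<forall>Q\<in>\<Q>. a Q \<in> I \<and> (\<forall>Q'\<in>\<Q> - {Q}. a Q \<notin> Q')"
      using bchoice[OF avoid_others] by blast
    show ?thesis
    proof (cases "\<exists>Q\<in>\<Q>. a Q \<notin> Q")
      case True
      then show ?thesis using a by blast
    next
      case False
      have "a Q0 + prod a (\<Q> - {Q0}) \<in> I \<and> (\<forall>Q\<in>\<Q>. a Q0 + prod a (\<Q> - {Q0}) \<notin> Q)"
        by (rule prime_avoidance_step[OF I less.prems(1) 3]) (use less.prems(2) a False in auto)
      then show ?thesis by blast
    qed
  qed
qed

lemma irreducible_closed_generic_point:
  fixes Z :: "'a::comm_ring_1 set set"
  assumes "irreducible_closed Z"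
  shows "prime_ideal (\<Inter>Z)" and "Z = {P \<in> Spec. \<Inter>Z \<subseteq> P}"
proof -
  obtain S where S: "Z = {P \<in> Spec. S \<subseteq> P}"
    using assms unfolding irreducible_closed_def zariski_closed_def by blast
  have nonempty: "Z \<noteq> {}" and
    irreducible: "\<And>Z1 Z2. zariski_closed Z1 \<Longrightarrow> zariski_closed Z2 \<Longrightarrow> Z \<subseteq> Z1 \<union> Z2
      \<Longrightarrow> Z \<subseteq> Z1 \<or> Z \<subseteq> Z2"
    using assms unfolding irreducible_closed_def by blast+
  have primes: "\<And>P. P \<in> Z \<Longrightarrow> prime_ideal P" using S unfolding Spec_def by auto
  have "is_ideal (\<Inter>Z)"
    using ideal_Inter[of Z id] primes prime_ideal_is_ideal by auto
  moreover have "1 \<notin> \<Inter>Z" using primes prime_ideal_one nonempty by blast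
  moreover have "x \<in> \<Inter>Z \<or> y \<in> \<Inter>Z" if xy: "x * y \<in> \<Inter>Z" for x y
  proof -
    let ?Vx = "{P \<in> Spec. {x} \<subseteq> P}" and ?Vy = "{P \<in> Spec. {y} \<subseteq> P}"
    have "zariski_closed ?Vx" "zariski_closed ?Vy" unfolding zariski_closed_def by blast+
    moreover have "Z \<subseteq> ?Vx \<union> ?Vy" using xy primes prime_ideal_mult S by blast
    ultimately have "Z \<subseteq> ?Vx \<or> Z \<subseteq> ?Vy" using irreducible by blast
    then show ?thesis by blast
  qed
  ultimately show "prime_ideal (\<Inter>Z)" unfolding prime_ideal_def is_ideal_def by blast
  show "Z = {P \<in> Spec. \<Inter>Z \<subseteq> P}" using S by blast
qed

lemma irreducible_closed_subset_iff:
  fixes C D :: "'a::comm_ring_1 set set"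
  assumes C: "irreducible_closed C" and D: "irreducible_closed D"
  shows "D \<subseteq> C \<longleftrightarrow> \<Inter>C \<subseteq> \<Inter>D"
proof
  assume "D \<subseteq> C"
  moreover have "\<Inter>D \<in> D"
    using irreducible_closed_generic_point[OF D] unfolding Spec_def by blast
  ultimately show "\<Inter>C \<subseteq> \<Inter>D" by blast
next
  assume "\<Inter>C \<subseteq> \<Inter>D"
  then show "D \<subseteq> C"
    using irreducible_closed_generic_point(2)[OF C] irreducible_closed_generic_point(2)[OF D] by blast
qed

definition prime_polygon :: "nat \<Rightarrow> (nat \<Rightarrow> 'a::comm_ring_1 set) \<Rightarrow> (nat \<Rightarrow> 'a set) \<Rightarrow> bool" where
  "prime_polygon m P Q \<longleftrightarrow> m > 2 \<and> (\<forall>i<m. prime_ideal (P i)) \<and> (\<forall>j<m. prime_ideal (Q j)) \<and>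
     (\<forall>i<m. \<forall>j<m. P i \<subseteq> Q j \<longleftrightarrow> (i = j \<or> i = (j + 1) mod m))"

lemma polygon_generic_points:
  fixes C D :: "nat \<Rightarrow> 'a::comm_ring_1 set set"
  assumes "is_polygon m C D"
  shows "prime_polygon m (\<lambda>i. \<Inter>(C i)) (\<lambda>j. \<Inter>(D j))"
  using assms irreducible_closed_generic_point(1) irreducible_closed_subset_iff
  unfolding is_polygon_def prime_polygon_def by metis

text \<open>Powers of a monic polynomial are monic, with the expected degree (over any
  commutative ring, since the leading coefficients multiply to 1).\<close>
lemma monic_power:
  fixes p :: "'a::comm_ring_1 poly"
  assumes monic: "lead_coeff p = 1"
  shows "degree (p ^ k) = degree p * k \<and> lead_coeff (p ^ k) = 1"
proof (induction k)
  case (Suc k)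
  then have deg: "degree (p ^ k) = degree p * k" and lead: "coeff (p ^ k) (degree p * k) = 1"
    by metis+
  have top: "coeff (p * p ^ k) (degree p + degree p * k) = 1"
    using coeff_mult_degree_sum[of p "p ^ k"] deg lead monic by simp
  then have "degree (p * p ^ k) = degree p + degree p * k"
    using degree_mult_le[of p "p ^ k"] le_degree[of "p * p ^ k"] deg by (metis le_antisym one_neq_zero)
  then show ?case using top by simp
qed simp

text \<open>In a 2n-adically closed ring every monic quadratic has a root modulo the nilradical:
  a root of g^n makes g nilpotent.\<close>
lemma quadratic_root_up_to_nilpotent:
  fixes b c :: "'a::comm_ring_1"
  assumes "k_adically_closed (2 * n) TYPE('a)"
  shows "\<exists>r. (r * r - b * r + c) ^ n = 0"
proof -
  define g where "g = [:c, -b, 1:]"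
  have "lead_coeff g = 1" "degree g = 2" unfolding g_def by (simp_all add: numeral_2_eq_2)
  then have "degree (g ^ n) = 2 * n \<and> lead_coeff (g ^ n) = 1"
    using monic_power[of g n] by (metis mult.commute)
  then obtain r where "poly (g ^ n) r = 0"
    using assms unfolding k_adically_closed_def by blast
  moreover have "poly g r = r * r - b * r + c" unfolding g_def by (simp add: algebra_simps)
  ultimately show ?thesis by (metis poly_power)
qed

lemma quadratic_residues:
  assumes P: "prime_ideal P" and root: "r * r - (x + y + w) * r + y * w \<in> P"
  shows "y * w \<in> P \<Longrightarrow> r \<in> P \<or> r - (x + y + w) \<in> P"
    and "x * w \<in> P \<Longrightarrow> r - (x + y) \<in> P \<or> r - w \<in> P"
proof -
  have ideal_P: "is_ideal P" using P by (rule prime_ideal_is_ideal)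
  assume "y * w \<in> P"
  then have "(r * r - (x + y + w) * r + y * w) - y * w \<in> P"
    using ideal_diff[OF ideal_P root] by blast
  moreover have "(r * r - (x + y + w) * r + y * w) - y * w = r * (r - (x + y + w))"
    by (simp add: algebra_simps)
  ultimately show "r \<in> P \<or> r - (x + y + w) \<in> P" using prime_ideal_mult[OF P] by simp
next
  have ideal_P: "is_ideal P" using P by (rule prime_ideal_is_ideal)
  assume "x * w \<in> P"
  then have "(r * r - (x + y + w) * r + y * w) + x * w \<in> P"
    using ideal_add[OF ideal_P root] by blast
  moreover have "(r * r - (x + y + w) * r + y * w) + x * w = (r - (x + y)) * (r - w)"
    by (simp add: algebra_simps)
  ultimately show "r - (x + y) \<in> P \<or> r - w \<in> P" using prime_ideal_mult[OF P] by simp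
qed

lemma root_choice_propagates:
  fixes P Q :: "nat \<Rightarrow> 'a::comm_ring_1 set"
  assumes "a \<le> c"
    and bridges: "\<And>k. a \<le> k \<Longrightarrow> k < c \<Longrightarrow>
      prime_ideal (Q k) \<and> P k \<subseteq> Q k \<and> P (Suc k) \<subseteq> Q k \<and> b \<notin> Q k"
    and roots: "\<And>k. a \<le> k \<Longrightarrow> k \<le> c \<Longrightarrow> r \<in> P k \<or> r - b \<in> P k"
  shows "r \<in> P a \<longleftrightarrow> r \<in> P c"
  using assms(1)
proof (induction c rule: dec_induct)
  case (step k)
  have "r \<in> P k \<longleftrightarrow> r \<in> P (Suc k)"
    using bridges[OF step.hyps(1,2)] roots[of k] roots[of "Suc k"] step.hyps
      prime_ideal_not_both[of "Q k" b r] by auto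
  then show ?case using step.IH by simp
qed simp

lemma prime_polygonD:
  assumes "prime_polygon m P Q"
  shows "m > 2" "\<And>i. i < m \<Longrightarrow> prime_ideal (P i)" "\<And>j. j < m \<Longrightarrow> prime_ideal (Q j)"
    "\<And>i j. i < m \<Longrightarrow> j < m \<Longrightarrow> P i \<subseteq> Q j \<longleftrightarrow> (i = j \<or> i = (j + 1) mod m)"
  using assms unfolding prime_polygon_def by blast+

lemma prime_polygon_incidences:
  assumes "prime_polygon m P Q"
  shows "P 0 \<subseteq> Q 0" "P 0 \<subseteq> Q (m - 1)" "P 1 \<subseteq> Q 0" "P (m - 1) \<subseteq> Q (m - 1)"
    and "\<And>k. k < m - 1 \<Longrightarrow> P k \<subseteq> Q k \<and> P (Suc k) \<subseteq> Q k"
    and "\<not> P (m - 1) \<subseteq> Q 0"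
    and "\<And>i. i \<in> {1..m-2} \<Longrightarrow> \<not> P i \<subseteq> Q (m - 1)"
    and "\<And>k. 0 < k \<Longrightarrow> k < m - 1 \<Longrightarrow> \<not> P 0 \<subseteq> Q k"
proof -
  note m = prime_polygonD(1)[OF assms] and incidence = prime_polygonD(4)[OF assms]
  show "P 0 \<subseteq> Q 0" "P 0 \<subseteq> Q (m - 1)" "P 1 \<subseteq> Q 0" "P (m - 1) \<subseteq> Q (m - 1)"
    using incidence[of 0 0] incidence[of 0 "m - 1"] incidence[of 1 0] incidence[of "m - 1" "m - 1"] m
    by auto
  show "P k \<subseteq> Q k \<and> P (Suc k) \<subseteq> Q k" if "k < m - 1" for k
    using incidence[of k k] incidence[of "Suc k" k] that by simp
  show "\<not> P (m - 1) \<subseteq> Q 0" using incidence[of "m - 1" 0] m by simp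
  show "\<not> P i \<subseteq> Q (m - 1)" if "i \<in> {1..m-2}" for i
  proof -
    have "i < m" "i \<noteq> m - 1" "i \<noteq> 0" "(m - 1 + 1) mod m = 0" using that m by auto
    then show ?thesis using incidence[of i "m - 1"] m by simp
  qed
  show "\<not> P 0 \<subseteq> Q k" if "0 < k" "k < m - 1" for k
    using incidence[of 0 k] that by simp
qed

text \<open>Prime avoidance applied to J = P 0 + P (m - 1) + (P 1 \<inter> ... \<inter> P (m - 2)), which is
  contained in no Q k: this produces b = x + y + w lying in no Q k.\<close>
lemma polygon_separating_element:
  fixes P Q :: "nat \<Rightarrow> 'a::comm_ring_1 set"
  assumes polygon: "prime_polygon m P Q"
  obtains x y w where "x \<in> P 0" "y \<in> P (m - 1)" "\<forall>i\<in>{1..m-2}. w \<in> P i"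
    "\<forall>k<m. x + y + w \<notin> Q k"
proof -
  note m = prime_polygonD(1)[OF polygon] and prime_P = prime_polygonD(2)[OF polygon]
    and prime_Q = prime_polygonD(3)[OF polygon]
  define W where "W = (\<Inter>i\<in>{1..m-2}. P i)"
  define J where "J = ideal_sum (ideal_sum (P 0) (P (m - 1))) W"
  have ideal_P: "\<And>i. i < m \<Longrightarrow> is_ideal (P i)" using prime_P prime_ideal_is_ideal by blast
  have ideal_W: "is_ideal W" unfolding W_def using ideal_P m by (intro ideal_Inter) auto
  have ideal_P0_Pm: "is_ideal (ideal_sum (P 0) (P (m - 1)))"
    using ideal_P m by (intro ideal_sum_is_ideal) auto
  have ideal_J: "is_ideal J" unfolding J_def using ideal_P0_Pm ideal_W by (rule ideal_sum_is_ideal)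
  have W_J: "W \<subseteq> J" unfolding J_def using ideal_sum_upper(2)[OF ideal_P0_Pm] .
  have P0_J: "P 0 \<subseteq> J" and Pm_J: "P (m - 1) \<subseteq> J"
    using ideal_sum_upper[OF ideal_W, of "ideal_sum (P 0) (P (m - 1))"]
      ideal_sum_upper[of "P (m - 1)" "P 0"] ideal_sum_upper[of "P 0" "P (m - 1)"] ideal_P m
    unfolding J_def by auto
  have "\<not> J \<subseteq> Q k" if k: "k < m" for k
  proof -
    consider "k = 0" | "k = m - 1" | "0 < k" "k < m - 1" using k by linarith
    then show ?thesis
    proof cases
      case 1
      then show ?thesis using prime_polygon_incidences(6)[OF polygon] Pm_J by blast
    next
      case 2
      have "\<not> W \<subseteq> Q (m - 1)"
        unfolding W_def using prime_Q[of "m - 1"] ideal_P prime_polygon_incidences(7)[OF polygon] m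
        by (intro Inter_not_subset_prime) auto
      then show ?thesis using W_J 2 by blast
    next
      case 3
      then show ?thesis using prime_polygon_incidences(8)[OF polygon] P0_J by blast
    qed
  qed
  then obtain b where "b \<in> J" and b: "\<forall>k<m. b \<notin> Q k"
    using prime_avoidance[OF ideal_J, of "Q ` {..<m}"] prime_Q by auto
  then obtain s w where "b = s + w" "s \<in> ideal_sum (P 0) (P (m - 1))" "w \<in> W"
    unfolding J_def ideal_sum_def by blast
  moreover from this(2) obtain x y where "s = x + y" "x \<in> P 0" "y \<in> P (m - 1)"
    unfolding ideal_sum_def by blast
  ultimately show ?thesis
    by (intro that[of x y w]) (use b in \<open>auto simp: W_def\<close>)
qed

lemma polygon_ends_incompatible:
  assumes polygon: "prime_polygon m P Q"
    and b: "b \<notin> Q 0" "b \<notin> Q (m - 1)"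
    and propagate: "r \<in> P 1 \<longleftrightarrow> r \<in> P (m - 1)"
    and ends: "r \<in> P 1 \<or> r - b \<in> P 1" "r \<in> P (m - 1) \<or> r - b \<in> P (m - 1)"
    and switch: "(r \<in> Q (m - 1) \<and> r - b \<in> Q 0) \<or> (r \<in> Q 0 \<and> r - b \<in> Q (m - 1))"
  shows False
proof -
  note m = prime_polygonD(1)[OF polygon] and prime_Q = prime_polygonD(3)[OF polygon]
  have Q0: "prime_ideal (Q 0)" and Qlast: "prime_ideal (Q (m - 1))" using prime_Q m by simp_all
  note P1_Q0 = prime_polygon_incidences(3)[OF polygon]
    and Plast_Qlast = prime_polygon_incidences(4)[OF polygon]
  from switch show False
  proof
    assume r: "r \<in> Q (m - 1) \<and> r - b \<in> Q 0"
    then have "r - b \<notin> P (m - 1)" using prime_ideal_not_both[OF Qlast b(2)] Plast_Qlast by blast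
    then have "r \<in> P 1" using ends(2) propagate by blast
    then show False using prime_ideal_not_both[OF Q0 b(1)] r P1_Q0 by blast
  next
    assume r: "r \<in> Q 0 \<and> r - b \<in> Q (m - 1)"
    then have "r \<notin> P (m - 1)" using prime_ideal_not_both[OF Qlast b(2)] Plast_Qlast by blast
    then have "r - b \<in> P 1" using ends(1) propagate by blast
    then show False using prime_ideal_not_both[OF Q0 b(1)] r P1_Q0 by blast
  qed
qed

lemma polygon_root_switch:
  assumes polygon: "prime_polygon m P Q"
    and x: "x \<in> P 0" and y: "y \<in> P (m - 1)" and w: "w \<in> P 1"
    and root_P0: "r - (x + y) \<in> P 0 \<or> r - w \<in> P 0"
  shows "(r \<in> Q (m - 1) \<and> r - (x + y + w) \<in> Q 0) \<or> (r \<in> Q 0 \<and> r - (x + y + w) \<in> Q (m - 1))"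
proof -
  note m = prime_polygonD(1)[OF polygon] and prime_Q = prime_polygonD(3)[OF polygon]
  have ideal_Q0: "is_ideal (Q 0)" and ideal_Qlast: "is_ideal (Q (m - 1))"
    using prime_Q[of 0] prime_Q[of "m - 1"] m prime_ideal_is_ideal by auto
  have xy: "x + y \<in> Q (m - 1)"
    using ideal_add[OF ideal_Qlast] x y prime_polygon_incidences(2,4)[OF polygon] by blast
  have "w \<in> Q 0" using w prime_polygon_incidences(3)[OF polygon] by blast
  moreover have "r = (r - (x + y)) + (x + y)" "r - (x + y + w) = (r - (x + y)) - w"
    "r = (r - w) + w" "r - (x + y + w) = (r - w) - (x + y)" by (simp_all add: algebra_simps)
  ultimately show ?thesis
    using root_P0 xy prime_polygon_incidences(1,2)[OF polygon]
      ideal_add[OF ideal_Q0] ideal_add[OF ideal_Qlast] ideal_diff[OF ideal_Q0] ideal_diff[OF ideal_Qlast]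
    by (metis subsetD)
qed

lemma polygon_no_quadratic_root:
  fixes P Q :: "nat \<Rightarrow> 'a::comm_ring_1 set"
  assumes polygon: "prime_polygon m P Q"
    and x: "x \<in> P 0" and y: "y \<in> P (m - 1)" and w: "\<forall>i\<in>{1..m-2}. w \<in> P i"
    and avoid: "\<forall>k<m. x + y + w \<notin> Q k"
    and root: "\<forall>i<m. r * r - (x + y + w) * r + y * w \<in> P i"
  shows False
proof -
  note m = prime_polygonD(1)[OF polygon] and prime_P = prime_polygonD(2)[OF polygon]
    and prime_Q = prime_polygonD(3)[OF polygon]
  have last: "m - 1 < m" and zero: "0 < m" using m by simp_all
  define b where "b = x + y + w"
  have roots: "r \<in> P i \<or> r - b \<in> P i" if i: "1 \<le> i" "i \<le> m - 1" for i
  proof -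
    have i_lt: "i < m" using i m by simp
    have "y * w \<in> P i"
      using ideal_mult_right[OF prime_ideal_is_ideal[OF prime_P[OF last]] y]
        ideal_mult_left[OF prime_ideal_is_ideal[OF prime_P[OF i_lt]]] w i
      by (cases "i = m - 1") auto
    then show ?thesis
      using quadratic_residues(1)[OF prime_P[OF i_lt]] root i_lt unfolding b_def by blast
  qed
  have propagate: "r \<in> P 1 \<longleftrightarrow> r \<in> P (m - 1)"
  proof (rule root_choice_propagates[where Q = Q and b = b])
    fix k assume "1 \<le> k" "k < m - 1"
    then show "prime_ideal (Q k) \<and> P k \<subseteq> Q k \<and> P (Suc k) \<subseteq> Q k \<and> b \<notin> Q k"
      using prime_Q prime_polygon_incidences(5)[OF polygon] avoid unfolding b_def by simp
  qed (use roots m in auto)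
  have "r - (x + y) \<in> P 0 \<or> r - w \<in> P 0"
    using quadratic_residues(2)[OF prime_P[OF zero]] root zero
      ideal_mult_right[OF prime_ideal_is_ideal[OF prime_P[OF zero]] x] by blast
  then have switch: "(r \<in> Q (m - 1) \<and> r - b \<in> Q 0) \<or> (r \<in> Q 0 \<and> r - b \<in> Q (m - 1))"
    using polygon_root_switch[OF polygon x y] w m unfolding b_def by simp
  have "b \<notin> Q 0" "b \<notin> Q (m - 1)" using avoid m unfolding b_def by auto
  moreover have "r \<in> P 1 \<or> r - b \<in> P 1" "r \<in> P (m - 1) \<or> r - b \<in> P (m - 1)"
    using roots m by simp_all
  ultimately show False using polygon_ends_incompatible[OF polygon _ _ propagate _ _ switch] by blast
qed

lemma no_prime_polygon:
  fixes P Q :: "nat \<Rightarrow> 'a::comm_ring_1 set"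
  assumes closed: "k_adically_closed (2 * n) TYPE('a)"
  shows "\<not> prime_polygon m P Q"
proof
  assume polygon: "prime_polygon m P Q"
  obtain x y w where x: "x \<in> P 0" and y: "y \<in> P (m - 1)" and w: "\<forall>i\<in>{1..m-2}. w \<in> P i"
    and avoid: "\<forall>k<m. x + y + w \<notin> Q k"
    using polygon_separating_element[OF polygon] by blast
  obtain r where "(r * r - (x + y + w) * r + y * w) ^ n = 0"
    using quadratic_root_up_to_nilpotent[OF closed] by blast
  then have "\<forall>i<m. r * r - (x + y + w) * r + y * w \<in> P i"
    using prime_polygonD(2)[OF polygon] prime_ideal_power prime_ideal_is_ideal ideal_zero
    by metis
  then show False using polygon_no_quadratic_root[OF polygon x y w avoid] by blast
qed

theorem mainTheorem1:
  fixes n :: nat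
  assumes "n \<ge> 1"
    and "k_adically_closed (2 * n) TYPE('a::comm_ring_1)"
  shows "\<not> (\<exists>m (C :: nat \<Rightarrow> 'a set set) D. is_polygon m C D)"
proof
  assume "\<exists>m (C :: nat \<Rightarrow> 'a set set) D. is_polygon m C D"
  then obtain m and C D :: "nat \<Rightarrow> 'a set set" where "is_polygon m C D" by blast
  then show False
    using polygon_generic_points no_prime_polygon[OF assms(2)] by blast
qed

end
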